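(* Let $p$ be a prime with $p\equiv 1 \pmod 4$, let $G=\mathbb{Z}_{2p}$ and $H=\{0,p\}\le G$. Define $A_0=\{s,\ s+p\in\mathbb{Z}_{2p}: s\in\{1,\dots,p-1\} \text{ is a quadratic residue modulo } p\}$ and $A_1=\{t,\ t+p\in\mathbb{Z}_{2p}: t\in\{1,\dots,p-1\} \text{ is a quadratic non-residue modulo } p\}$ (so $|A_0|=|A_1|=p-1$ and $\mathbb{Z}_{2p}\setminus(A_0\cup A_1)=H$). Then (i) $\Delta(A_0)=\frac{p-5}{2}A_0\cup\frac{p-1}{2}A_1\cup(p-1)\{p\}$; (ii) $\Delta(A_1)=\frac{p-5}{2}A_1\cup\frac{p-1}{2}A_0\cup(p-1)\{p\}$; (iii) $\{A_0,A_1\}$ is a $(2p,2,p-1,p-3,2p-2)$-DPDF and a $(2p,2,p-1,p-1,0)$-EPDF in $\mathbb{Z}_{2p}$.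
   Context: For $D\subseteq \mathbb{Z}_v$, $\Delta(D)$ is the multiset $\{x-y:x,y\in D,x\ne y\}$, and $\Delta(D_1,D_2)$ is the multiset $\{x-y:x\in D_1,y\in D_2\}$. For a nonnegative integer $\lambda$ and a set $X$, $\lambda X$ denotes the multiset consisting of $\lambda$ copies of each element of $X$, and $\cup$ between multisets denotes multiset union. For a family $A=\{A_1,\dots,A_s\}$ of pairwise disjoint subsets, ${\rm Int}(A)=\bigcup_i\Delta(A_i)$ and ${\rm Ext}(A)=\bigcup_{i\ne j}\Delta(A_i,A_j)$. In a group $G$ of order $v$ with identity $0$, a $(v,s,k,\lambda,\mu)$-DPDF is a family of $s$ pairwise disjoint $k$-subsets of $G\setminus\{0\}$ with union $S$ such that ${\rm Int}(A)$ contains each element of $S$ exactly $\lambda$ times and each element of $G\setminus(S\cup\{0\})$ exactly $\mu$ times; a $(v,s,k,\lambda,\mu)$-EPDF is defined the same way using ${\rm Ext}(A)$. *)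

theory Defs
  imports "HOL-Library.Multiset" "HOL-Number_Theory.Number_Theory"
begin

text \<open>The cyclic group Z_v is represented by the integers 0..v-1 with addition mod v.\<close>

definition zgrp :: "int \<Rightarrow> int set" where
  "zgrp v = {0..<v}"

definition Delta :: "int \<Rightarrow> int set \<Rightarrow> int multiset" where
  "Delta v D = image_mset (\<lambda>(x, y). (x - y) mod v)
      (mset_set {(x, y). x \<in> D \<and> y \<in> D \<and> x \<noteq> y})"

definition Delta2 :: "int \<Rightarrow> int set \<Rightarrow> int set \<Rightarrow> int multiset" where
  "Delta2 v D1 D2 = image_mset (\<lambda>(x, y). (x - y) mod v) (mset_set (D1 \<times> D2))"

definition mcopies :: "nat \<Rightarrow> 'a set \<Rightarrow> 'a multiset" where
  "mcopies l X = repeat_mset l (mset_set X)"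

definition IntD :: "int \<Rightarrow> int set set \<Rightarrow> int multiset" where
  "IntD v F = (\<Sum>A\<in>F. Delta v A)"

definition ExtD :: "int \<Rightarrow> int set set \<Rightarrow> int multiset" where
  "ExtD v F = (\<Sum>(A, B)\<in>{(A, B). A \<in> F \<and> B \<in> F \<and> A \<noteq> B}. Delta2 v A B)"

definition pdf_family :: "int \<Rightarrow> nat \<Rightarrow> nat \<Rightarrow> int set set \<Rightarrow> bool" where
  "pdf_family v s k F \<longleftrightarrow> finite F \<and> card F = s \<and>
     (\<forall>A\<in>F. A \<subseteq> zgrp v - {0} \<and> card A = k) \<and>
     (\<forall>A\<in>F. \<forall>B\<in>F. A \<noteq> B \<longrightarrow> A \<inter> B = {})"

definition is_DPDF :: "int \<Rightarrow> nat \<Rightarrow> nat \<Rightarrow> nat \<Rightarrow> nat \<Rightarrow> int set set \<Rightarrow> bool" where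
  "is_DPDF v s k l m F \<longleftrightarrow> pdf_family v s k F \<and>
     (\<forall>x\<in>\<Union>F. count (IntD v F) x = l) \<and>
     (\<forall>x\<in>zgrp v - (\<Union>F \<union> {0}). count (IntD v F) x = m)"

definition is_EPDF :: "int \<Rightarrow> nat \<Rightarrow> nat \<Rightarrow> nat \<Rightarrow> nat \<Rightarrow> int set set \<Rightarrow> bool" where
  "is_EPDF v s k l m F \<longleftrightarrow> pdf_family v s k F \<and>
     (\<forall>x\<in>\<Union>F. count (ExtD v F) x = l) \<and>
     (\<forall>x\<in>zgrp v - (\<Union>F \<union> {0}). count (ExtD v F) x = m)"

end

theory Submission
  imports Defs
begin

text \<open>Reduction mod p maps A0 and A1 two-to-one onto the quadratic residues Q and the
non-residues N of Z_p, so every difference count in Z_2p is twice a difference count in Z_p,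
where the residue 0 of Z_p accounts for the two differences 0 and p.
The counts in Z_p are the cyclotomic numbers of order 2: multiplication by r permutes Q and N
according to the Legendre symbol of r, which reduces every count to differences equal to 1.
Write p = 4k + 1. Since -1 is a square, the pairs (Q, N) and (N, Q) occur equally often; with the
row sums |Q - {1}| = 2k - 1 and |N| = 2k and the total number 2k (2k - 1) of pairs of distinct
quadratic residues, this forces (Q, Q) = k - 1 and (N, N) = (Q, N) = (N, Q) = k.\<close>

section \<open>Difference counts in Z_v\<close>

definition diff_count :: "int \<Rightarrow> int set \<Rightarrow> int set \<Rightarrow> int \<Rightarrow> nat" where
  "diff_count v X Y d = card {(x, y). x \<in> X \<and> y \<in> Y \<and> (x - y) mod v = d}"

lemma finite_diff_count_set:
  "finite X \<Longrightarrow> finite Y \<Longrightarrow> finite {(x, y). x \<in> X \<and> y \<in> Y \<and> P x y}"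
  by (rule finite_subset[of _ "X \<times> Y"]) auto

lemma count_image_mset_mset_set:
  assumes "finite S"
  shows "count (image_mset f (mset_set S)) a = card {z \<in> S. f z = a}"
proof -
  have "count (image_mset f (mset_set S)) a = (\<Sum>z\<in>f -` {a} \<inter> S. 1)"
    using assms by (simp add: count_image_mset)
  also have "f -` {a} \<inter> S = {z \<in> S. f z = a}"
    by auto
  finally show ?thesis
    by simp
qed

lemma count_Delta2:
  assumes "finite X" "finite Y"
  shows "count (Delta2 v X Y) d = diff_count v X Y d"
  unfolding Delta2_def diff_count_def count_image_mset_mset_set[OF finite_cartesian_product[OF assms]]
  by (rule arg_cong[where f = card]) auto

lemma count_Delta:
  assumes "X \<subseteq> {0..<v}"
  shows "count (Delta v X) d = (if d = 0 then 0 else diff_count v X X d)"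
proof -
  have fin: "finite {(x, y). x \<in> X \<and> y \<in> X \<and> x \<noteq> y}"
    using assms finite_subset by (intro finite_diff_count_set) blast+
  have "x = y" if "x \<in> X" "y \<in> X" "(x - y) mod v = 0" for x y
  proof -
    have "[x = y] (mod v)"
      using that(3) by (simp add: cong_iff_dvd_diff mod_eq_0_iff_dvd)
    then show ?thesis
      using that(1,2) assms by (intro cong_less_imp_eq_int) auto
  qed
  then have "{z \<in> {(x, y). x \<in> X \<and> y \<in> X \<and> x \<noteq> y}. (case z of (x, y) \<Rightarrow> (x - y) mod v) = d}
      = (if d = 0 then {} else {(x, y). x \<in> X \<and> y \<in> X \<and> (x - y) mod v = d})"
    by (cases "d = 0") fastforce+
  then show ?thesis
    unfolding Delta_def diff_count_def count_image_mset_mset_set[OF fin] by simp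
qed

lemma diff_count_eq_card_filter:
  assumes "Y \<subseteq> {0..<v}" "d \<in> {0..<v}"
  shows "diff_count v X Y d = card {x \<in> X. (x - d) mod v \<in> Y}"
proof -
  have "{(x, y). x \<in> X \<and> y \<in> Y \<and> (x - y) mod v = d}
      = (\<lambda>x. (x, (x - d) mod v)) ` {x \<in> X. (x - d) mod v \<in> Y}"
  proof (intro equalityI subsetI)
    fix z assume "z \<in> {(x, y). x \<in> X \<and> y \<in> Y \<and> (x - y) mod v = d}"
    then obtain x y where z: "z = (x, y)" "x \<in> X" "y \<in> Y" "(x - y) mod v = d"
      by blast
    have "(x - d) mod v = (x - (x - y)) mod v"
      using z(4) by (metis mod_diff_right_eq)
    also have "\<dots> = y"
      using z(3) assms(1) by auto
    finally show "z \<in> (\<lambda>x. (x, (x - d) mod v)) ` {x \<in> X. (x - d) mod v \<in> Y}"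
      using z by auto
  next
    fix z assume "z \<in> (\<lambda>x. (x, (x - d) mod v)) ` {x \<in> X. (x - d) mod v \<in> Y}"
    then obtain x where "z = (x, (x - d) mod v)" "x \<in> X" "(x - d) mod v \<in> Y"
      by blast
    moreover have "(x - (x - d) mod v) mod v = d"
      using assms(2) by (simp add: mod_diff_right_eq)
    ultimately show "z \<in> {(x, y). x \<in> X \<and> y \<in> Y \<and> (x - y) mod v = d}"
      by auto
  qed
  then show ?thesis
    by (simp add: diff_count_def card_image inj_on_def)
qed

lemma diff_count_zero:
  assumes "X \<subseteq> {0..<v}" "Y \<subseteq> {0..<v}"
  shows "diff_count v X Y 0 = card (X \<inter> Y)"
proof (cases "v > 0")
  case True
  then have "{x \<in> X. (x - 0) mod v \<in> Y} = X \<inter> Y"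
    using assms by auto
  then show ?thesis
    using diff_count_eq_card_filter[OF assms(2)] True by simp
next
  case False
  then have "X = {}"
    using assms(1) by auto
  then show ?thesis
    by (simp add: diff_count_def)
qed

lemma diff_count_outside:
  assumes "v > 0" "d \<notin> {0..<v}"
  shows "diff_count v X Y d = 0"
proof -
  have "(x - y) mod v \<noteq> d" for x y
    using assms by auto
  then show ?thesis
    by (simp add: diff_count_def)
qed

lemma inj_on_mult_mod:
  fixes m v :: int
  assumes "coprime m v"
  shows "inj_on (\<lambda>a. m * a mod v) {0..<v}"
proof (rule inj_onI)
  fix a b assume "a \<in> {0..<v}" "b \<in> {0..<v}" "m * a mod v = m * b mod v"
  then show "a = b"
    using cong_mult_lcancel[OF assms] by (intro cong_less_imp_eq_int) (auto simp: cong_def)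
qed

lemma diff_count_mult:
  assumes "coprime m v" "X \<subseteq> {0..<v}" "Y \<subseteq> {0..<v}" "d \<in> {0..<v}"
  shows "diff_count v ((\<lambda>a. m * a mod v) ` X) ((\<lambda>a. m * a mod v) ` Y) (m * d mod v)
       = diff_count v X Y d"
proof -
  define f where "f a = m * a mod v" for a
  have inj: "inj_on f {0..<v}"
    unfolding f_def by (rule inj_on_mult_mod[OF assms(1)])
  have diff_iff: "(f a - f b) mod v = m * d mod v \<longleftrightarrow> (a - b) mod v = d" for a b
  proof -
    have "(f a - f b) mod v = m * d mod v \<longleftrightarrow> [m * (a - b) = m * d] (mod v)"
      by (simp add: f_def cong_def mod_diff_eq right_diff_distrib)
    also have "\<dots> \<longleftrightarrow> (a - b) mod v = d"
      unfolding cong_mult_lcancel[OF assms(1)] using assms(4) by (simp add: cong_def)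
    finally show ?thesis .
  qed
  have "{(x, y). x \<in> f ` X \<and> y \<in> f ` Y \<and> (x - y) mod v = m * d mod v}
      = map_prod f f ` {(x, y). x \<in> X \<and> y \<in> Y \<and> (x - y) mod v = d}"
    using diff_iff by fastforce
  moreover have "inj_on (map_prod f f) {(x, y). x \<in> X \<and> y \<in> Y \<and> (x - y) mod v = d}"
    using inj_on_subset[OF inj assms(2)] inj_on_subset[OF inj assms(3)]
    by (auto simp: inj_on_def)
  ultimately show ?thesis
    unfolding diff_count_def f_def[symmetric] by (simp add: card_image)
qed

lemma diff_count_commute:
  assumes "d \<in> {0..<v}"
  shows "diff_count v Y X (- d mod v) = diff_count v X Y d"
proof -
  have "(y - x) mod v = - d mod v \<longleftrightarrow> (x - y) mod v = d" for x y
  proof -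
    have "(y - x) mod v = - d mod v \<longleftrightarrow> [- (x - y) = - d] (mod v)"
      by (simp add: cong_def)
    also have "\<dots> \<longleftrightarrow> (x - y) mod v = d"
      unfolding cong_minus_minus_iff using assms by (simp add: cong_def)
    finally show ?thesis .
  qed
  then have "{(y, x). y \<in> Y \<and> x \<in> X \<and> (y - x) mod v = - d mod v}
      = prod.swap ` {(x, y). x \<in> X \<and> y \<in> Y \<and> (x - y) mod v = d}"
    by fastforce
  then show ?thesis
    unfolding diff_count_def by (simp add: card_image)
qed

lemma diff_count_Un:
  assumes "finite X" "finite Y" "finite Z" "Y \<inter> Z = {}"
  shows "diff_count v X (Y \<union> Z) d = diff_count v X Y d + diff_count v X Z d"
proof -
  have "{(x, y). x \<in> X \<and> y \<in> Y \<union> Z \<and> (x - y) mod v = d}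
      = {(x, y). x \<in> X \<and> y \<in> Y \<and> (x - y) mod v = d}
        \<union> {(x, y). x \<in> X \<and> y \<in> Z \<and> (x - y) mod v = d}"
    by blast
  then show ?thesis
    unfolding diff_count_def using assms
    by (simp add: card_Un_disjoint finite_diff_count_set disjoint_iff)
qed

lemma diff_count_nonzero:
  assumes "X \<subseteq> {0..<v}" "d \<in> {0..<v}"
  shows "diff_count v X {1..v-1} d = card (X - {d})"
proof -
  have "(x - d) mod v \<in> {1..v-1} \<longleftrightarrow> x \<noteq> d" if "x \<in> X" for x
  proof -
    have "(x - d) mod v = 0 \<longleftrightarrow> x = d"
      using that assms cong_less_imp_eq_int[of x v d]
      by (auto simp: cong_iff_dvd_diff mod_eq_0_iff_dvd)
    moreover have "0 \<le> (x - d) mod v" "(x - d) mod v < v"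
      using assms(2) by auto
    ultimately show ?thesis
      by auto
  qed
  then have "{x \<in> X. (x - d) mod v \<in> {1..v-1}} = X - {d}"
    by blast
  moreover have "{1..v-1} \<subseteq> {0..<v}"
    by auto
  ultimately show ?thesis
    using assms(2) diff_count_eq_card_filter by metis
qed

lemma sum_diff_count:
  assumes "finite X" "finite Y" "v > 0"
  shows "(\<Sum>d\<in>{0..<v}. diff_count v X Y d) = card X * card Y"
proof -
  have "X \<times> Y = (\<Union>d\<in>{0..<v}. {(x, y). x \<in> X \<and> y \<in> Y \<and> (x - y) mod v = d})"
    using assms(3) by auto
  then have "card (X \<times> Y) = (\<Sum>d\<in>{0..<v}. diff_count v X Y d)"
    unfolding diff_count_def using assms(1,2)
    by (simp add: card_UN_disjoint finite_diff_count_set disjoint_iff)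
  then show ?thesis
    by (simp add: card_cartesian_product)
qed

lemma sum_diff_count_nonzero:
  assumes "X \<subseteq> {0..<v}" "v > 0"
  shows "(\<Sum>d\<in>{1..v-1}. diff_count v X X d) + card X = card X * card X"
proof -
  have "finite X"
    using assms(1) finite_subset by blast
  have "{0..<v} = insert 0 {1..v-1}"
    using assms(2) by auto
  then have "card X * card X = diff_count v X X 0 + (\<Sum>d\<in>{1..v-1}. diff_count v X X d)"
    using sum_diff_count[OF \<open>finite X\<close> \<open>finite X\<close> assms(2)] by simp
  then show ?thesis
    using diff_count_zero[OF assms(1,1)] by simp
qed

lemma count_mcopies: "finite X \<Longrightarrow> count (mcopies l X) d = (if d \<in> X then l else 0)"
  by (simp add: mcopies_def)

lemma IntD_pair: "A \<noteq> B \<Longrightarrow> IntD v {A, B} = Delta v A + Delta v B"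
  by (simp add: IntD_def)

lemma ExtD_pair: "A \<noteq> B \<Longrightarrow> ExtD v {A, B} = Delta2 v A B + Delta2 v B A"
proof -
  assume "A \<noteq> B"
  then have "{(X, Y). X \<in> {A, B} \<and> Y \<in> {A, B} \<and> X \<noteq> Y} = {(A, B), (B, A)}"
    by auto
  then show ?thesis
    using \<open>A \<noteq> B\<close> by (simp add: ExtD_def)
qed


section \<open>Lifting from Z_p to Z_2p\<close>

definition lift :: "int \<Rightarrow> int set \<Rightarrow> int set" where
  "lift p X = {x \<in> {0..<2*p}. x mod p \<in> X}"

lemma finite_lift: "finite (lift p X)"
  by (rule finite_subset[of _ "{0..<2*p}"]) (auto simp: lift_def)

lemma lift_eq_Un_shift:
  assumes "X \<subseteq> {0..<p}"
  shows "lift p X = X \<union> (\<lambda>s. s + p) ` X"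
proof (intro equalityI subsetI)
  fix x assume x: "x \<in> lift p X"
  show "x \<in> X \<union> (\<lambda>s. s + p) ` X"
  proof (cases "x < p")
    case True
    then show ?thesis
      using x by (auto simp: lift_def)
  next
    case False
    have "x mod p = (x - p) mod p"
      by simp
    also have "\<dots> = x - p"
      using x False by (intro mod_pos_pos_trivial) (auto simp: lift_def)
    finally have "x mod p = x - p" .
    then show ?thesis
      using x by (auto simp: lift_def intro!: image_eqI[of _ _ "x - p"])
  qed
next
  fix x assume "x \<in> X \<union> (\<lambda>s. s + p) ` X"
  then show "x \<in> lift p X"
    using assms by (auto simp: lift_def)
qed

lemma card_lift:
  assumes "X \<subseteq> {0..<p}"
  shows "card (lift p X) = 2 * card X"
proof -
  have "finite X"
    using assms finite_subset by blast
  moreover have "s + p \<notin> X" if "s \<in> X" for s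
    using assms that subsetD[OF assms, of s] subsetD[OF assms, of "s + p"] by auto
  then have "X \<inter> (\<lambda>s. s + p) ` X = {}"
    by blast
  ultimately show ?thesis
    unfolding lift_eq_Un_shift[OF assms] by (simp add: card_Un_disjoint card_image)
qed

lemma residues_2p_cases:
  fixes d p :: int
  assumes "d \<in> {0..<2*p}"
  obtains "d = 0" | "d = p" | "d mod p \<in> {1..p-1}"
proof (cases "d < p")
  case True
  then show ?thesis
    using that assms by (cases "d = 0") (auto simp: mod_pos_pos_trivial)
next
  case False
  have "d mod p = (d - p) mod p"
    by simp
  also have "\<dots> = d - p"
    using False assms by (intro mod_pos_pos_trivial) auto
  finally show ?thesis
    using that assms False by (cases "d = p") auto
qed

lemma diff_count_lift:
  assumes "X \<subseteq> {0..<p}" "Y \<subseteq> {0..<p}" "d \<in> {0..<2*p}"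
  shows "diff_count (2*p) (lift p X) (lift p Y) d = 2 * diff_count p X Y (d mod p)"
proof -
  have "p > 0"
    using assms(3) by simp
  have "x mod p \<in> X \<and> (x - d) mod (2*p) mod p \<in> Y \<longleftrightarrow>
        x mod p \<in> X \<and> (x mod p - d mod p) mod p \<in> Y" for x
    by (simp add: mod_mod_cancel mod_diff_eq)
  then have filter_eq: "{x \<in> lift p X. (x - d) mod (2*p) \<in> lift p Y}
      = lift p {a \<in> X. (a - d mod p) mod p \<in> Y}"
    using \<open>p > 0\<close> by (auto simp: lift_def)
  have "diff_count (2*p) (lift p X) (lift p Y) d = card {x \<in> lift p X. (x - d) mod (2*p) \<in> lift p Y}"
    using assms(3) by (intro diff_count_eq_card_filter) (auto simp: lift_def)
  also have "\<dots> = 2 * card {a \<in> X. (a - d mod p) mod p \<in> Y}"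
    unfolding filter_eq using assms(1) by (intro card_lift) auto
  also have "\<dots> = 2 * diff_count p X Y (d mod p)"
    using assms(2) \<open>p > 0\<close> by (simp add: diff_count_eq_card_filter)
  finally show ?thesis .
qed


section \<open>The Legendre symbol\<close>

lemma euler_criterion_int:
  fixes p :: int
  assumes "prime p" "p > 2"
  shows "[Legendre a p = a ^ nat ((p - 1) div 2)] (mod p)"
proof -
  have "[Legendre a (int (nat p)) = a ^ ((nat p - 1) div 2)] (mod int (nat p))"
    using assms by (intro euler_criterion) auto
  moreover have "(nat p - 1) div 2 = nat ((p - 1) div 2)"
    using assms by (simp add: nat_div_distrib nat_diff_distrib)
  ultimately show ?thesis
    using assms by simp
qed

lemma Legendre_cases: "Legendre a p \<in> {-1, 0, 1}"
  by (simp add: Legendre_def)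

lemma Legendre_eq_if_cong:
  fixes p :: int
  assumes "p > 2" "x \<in> {-1, 0, 1}" "[Legendre a p = x] (mod p)"
  shows "Legendre a p = x"
proof -
  have "[Legendre a p + 1 = x + 1] (mod p)"
    using assms(3) by (rule cong_add) simp
  then have "Legendre a p + 1 = x + 1"
    using assms(1,2) Legendre_cases[of a p] by (intro cong_less_imp_eq_int) auto
  then show ?thesis
    by simp
qed

lemma Legendre_mult:
  fixes p :: int
  assumes "prime p" "p > 2"
  shows "Legendre (a * b) p = Legendre a p * Legendre b p"
proof (rule Legendre_eq_if_cong[OF assms(2)])
  show "Legendre a p * Legendre b p \<in> {-1, 0, 1}"
    using Legendre_cases[of a p] Legendre_cases[of b p] by auto
  have "[Legendre a p * Legendre b p = a ^ nat ((p - 1) div 2) * b ^ nat ((p - 1) div 2)] (mod p)"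
    using euler_criterion_int[OF assms, of a] euler_criterion_int[OF assms, of b] by (rule cong_mult)
  then show "[Legendre (a * b) p = Legendre a p * Legendre b p] (mod p)"
    using euler_criterion_int[OF assms, of "a * b"]
    by (metis cong_sym cong_trans power_mult_distrib)
qed

lemma Legendre_mod: "Legendre (a mod p) p = Legendre a p"
  by (simp add: Legendre_def QuadRes_def cong_def)

lemma Legendre_one: "p > 1 \<Longrightarrow> Legendre 1 p = 1"
  by (auto simp: Legendre_def QuadRes_def cong_def intro: exI[of _ 1])

lemma Legendre_not_dvd: "\<not> p dvd a \<Longrightarrow> Legendre a p \<in> {1, -1}"
  by (auto simp: Legendre_def cong_0_iff)

lemma Legendre_minus_one:
  fixes p :: int
  assumes "prime p" "[p = 1] (mod 4)"
  shows "Legendre (-1) p = 1"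
proof -
  define k where "k = p div 4"
  have k: "p = 4 * k + 1"
    using assms(2) div_mult_mod_eq[of p 4] by (simp add: cong_def k_def)
  have "p > 2"
    using k prime_ge_2_int[OF assms(1)] by presburger
  have "nat ((p - 1) div 2) = 2 * nat k"
    using k \<open>p > 2\<close> by simp
  then have "[Legendre (-1) p = 1] (mod p)"
    using euler_criterion_int[OF assms(1) \<open>p > 2\<close>, of "-1"] by (simp add: power_mult)
  then show ?thesis
    using \<open>p > 2\<close> by (intro Legendre_eq_if_cong) auto
qed

lemma sign_mult_eq:
  fixes l e :: int
  assumes "l \<in> {1, -1}" "e \<in> {1, -1}"
  shows "l * e = (if e = l then 1 else -1)"
  using assms by auto


section \<open>Quadratic residue classes\<close>

definition legendre_class :: "int \<Rightarrow> int \<Rightarrow> int set" where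
  "legendre_class p e = {a \<in> {1..p-1}. Legendre a p = e}"

lemma legendre_class_subset: "legendre_class p e \<subseteq> {1..p-1}"
  by (auto simp: legendre_class_def)

lemma legendre_class_subset_residues: "legendre_class p e \<subseteq> {0..<p}"
  using legendre_class_subset[of p e] by auto

lemma finite_legendre_class [simp]: "finite (legendre_class p e)"
  using legendre_class_subset finite_subset by blast

lemma one_mem_legendre_class: "p > 1 \<Longrightarrow> 1 \<in> legendre_class p 1"
  by (simp add: legendre_class_def Legendre_one)

lemma legendre_class_disjoint: "legendre_class p 1 \<inter> legendre_class p (-1) = {}"
  by (auto simp: legendre_class_def)

lemma Legendre_residue: "r \<in> {1..p-1} \<Longrightarrow> Legendre r p \<in> {1, -1}"
  by (intro Legendre_not_dvd) (auto dest: zdvd_imp_le)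

lemma legendre_class_Un: "legendre_class p 1 \<union> legendre_class p (-1) = {1..p-1}"
  using Legendre_residue by (fastforce simp: legendre_class_def)

lemma legendre_class_QuadRes:
  "legendre_class p 1 = {s. s \<in> {1..p-1} \<and> QuadRes p s}"
  "legendre_class p (-1) = {s. s \<in> {1..p-1} \<and> \<not> QuadRes p s}"
  by (auto simp: legendre_class_def Legendre_def cong_0_iff dest: zdvd_imp_le)

lemma mem_lift_legendre_class:
  "d \<in> lift p (legendre_class p e) \<longleftrightarrow>
    d \<in> {0..<2*p} \<and> d mod p \<in> {1..p-1} \<and> Legendre (d mod p) p = e"
  by (auto simp: lift_def legendre_class_def Legendre_mod)

lemma inj_on_mult_mod_legendre_class:
  assumes "prime p" "\<not> p dvd m"
  shows "inj_on (\<lambda>a. m * a mod p) (legendre_class p e)"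
proof -
  have "coprime m p"
    using prime_imp_coprime[OF assms] by (simp add: coprime_commute)
  then show ?thesis
    by (rule inj_on_subset[OF inj_on_mult_mod legendre_class_subset_residues])
qed

lemma mod_mem_legendre_class:
  assumes "\<not> p dvd a" "p > 0"
  shows "a mod p \<in> legendre_class p (Legendre a p)"
proof -
  have "a mod p \<noteq> 0" "0 \<le> a mod p" "a mod p < p"
    using assms by (auto simp: dvd_eq_mod_eq_0)
  then show ?thesis
    by (auto simp: legendre_class_def Legendre_mod)
qed

lemma mult_mod_legendre_class_subset:
  assumes "prime p" "p > 2" "\<not> p dvd m"
  shows "(\<lambda>a. m * a mod p) ` legendre_class p e \<subseteq> legendre_class p (Legendre m p * e)"
proof
  fix b assume "b \<in> (\<lambda>a. m * a mod p) ` legendre_class p e"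
  then obtain a where a: "a \<in> legendre_class p e" "b = m * a mod p"
    by blast
  then have "\<not> p dvd a"
    by (auto simp: legendre_class_def dest: zdvd_imp_le)
  then have "\<not> p dvd m * a"
    using assms(1,3) prime_dvd_mult_iff by blast
  moreover have "Legendre (m * a) p = Legendre m p * e"
    using a(1) Legendre_mult[OF assms(1,2)] by (simp add: legendre_class_def)
  ultimately show "b \<in> legendre_class p (Legendre m p * e)"
    using mod_mem_legendre_class[of p "m * a"] a(2) assms(2) by simp
qed

lemma card_legendre_class_1_le:
  assumes "prime p" "p > 2"
  shows "card (legendre_class p 1) \<le> nat ((p - 1) div 2)"
proof -
  define h where "h = (p - 1) div 2"
  have p_eq: "p = 2 * h + 1"
    using prime_odd_int[OF assms] by (simp add: h_def)
  have "legendre_class p 1 \<subseteq> (\<lambda>y. y^2 mod p) ` {1..h}"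
  proof
    fix s assume s: "s \<in> legendre_class p 1"
    then have "s \<in> {1..p-1}" "QuadRes p s"
      by (auto simp: legendre_class_def Legendre_def split: if_splits)
    then obtain y where y: "[y^2 = s] (mod p)"
      by (auto simp: QuadRes_def)
    define y0 where "y0 = y mod p"
    define z where "z = (if y0 \<le> h then y0 else p - y0)"
    have "[z = y0] (mod p) \<or> [z = - y0] (mod p)"
      by (auto simp: z_def cong_def mod_diff_left_eq[symmetric])
    then have "[z^2 = y0^2] (mod p)"
      by (metis cong_pow power2_minus)
    moreover have "[y0^2 = y^2] (mod p)"
      by (simp add: y0_def cong_def power_mod)
    ultimately have z_sq: "z^2 mod p = s"
      using y \<open>s \<in> {1..p-1}\<close> by (auto simp: cong_def)
    have "y0 \<noteq> 0"
      using z_sq \<open>s \<in> {1..p-1}\<close> \<open>[z^2 = y0^2] (mod p)\<close> by (auto simp: cong_def)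
    moreover have "0 \<le> y0" "y0 < p"
      using assms(2) by (auto simp: y0_def)
    ultimately have "z \<in> {1..h}"
      using p_eq by (auto simp: z_def)
    then show "s \<in> (\<lambda>y. y^2 mod p) ` {1..h}"
      using z_sq by blast
  qed
  then have "card (legendre_class p 1) \<le> card ((\<lambda>y. y^2 mod p) ` {1..h})"
    by (intro card_mono) auto
  also have "\<dots> \<le> card {1..h}"
    by (rule card_image_le) simp
  finally show ?thesis
    by (simp add: h_def)
qed

lemma card_legendre_class:
  assumes "prime p" "p > 2" "e \<in> {1, -1}"
  shows "card (legendre_class p e) = nat ((p - 1) div 2)"
proof -
  have "card (legendre_class p 1) + card (legendre_class p (-1)) = nat (p - 1)"
    using legendre_class_Un legendre_class_disjoint
    by (simp flip: card_Un_disjoint)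
  moreover have "card (legendre_class p (-1)) \<le> card (legendre_class p 1)"
  proof (cases "legendre_class p (-1) = {}")
    case False
    then obtain n where n: "n \<in> legendre_class p (-1)"
      by blast
    then have "\<not> p dvd n"
      by (auto simp: legendre_class_def dest: zdvd_imp_le)
    then have "inj_on (\<lambda>a. n * a mod p) (legendre_class p (-1))"
      using assms(1) by (intro inj_on_mult_mod_legendre_class)
    moreover have "(\<lambda>a. n * a mod p) ` legendre_class p (-1) \<subseteq> legendre_class p 1"
      using mult_mod_legendre_class_subset[OF assms(1,2) \<open>\<not> p dvd n\<close>, of "-1"] n
      by (simp add: legendre_class_def)
    ultimately show ?thesis
      by (intro card_inj_on_le) auto
  qed simp
  moreover have "card (legendre_class p 1) \<le> nat ((p - 1) div 2)"
    using card_legendre_class_1_le[OF assms(1,2)] .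
  ultimately show ?thesis
    using assms(2,3) by auto
qed

lemma legendre_class_mult:
  assumes "prime p" "p > 2" "\<not> p dvd m" "e \<in> {1, -1}"
  shows "(\<lambda>a. m * a mod p) ` legendre_class p e = legendre_class p (Legendre m p * e)"
proof (rule card_subset_eq)
  have "inj_on (\<lambda>a. m * a mod p) (legendre_class p e)"
    using assms(1,3) by (rule inj_on_mult_mod_legendre_class)
  moreover have "Legendre m p * e \<in> {1, -1}"
    using Legendre_not_dvd[OF assms(3)] assms(4) by auto
  ultimately show "card ((\<lambda>a. m * a mod p) ` legendre_class p e) = card (legendre_class p (Legendre m p * e))"
    using assms by (simp add: card_image card_legendre_class)
qed (use mult_mod_legendre_class_subset[OF assms(1-3)] in auto)

lemma diff_count_legendre_class_normalize:
  assumes "prime p" "p > 2" "r \<in> {1..p-1}" "e1 \<in> {1, -1}" "e2 \<in> {1, -1}"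
  shows "diff_count p (legendre_class p e1) (legendre_class p e2) r
       = diff_count p (legendre_class p (Legendre r p * e1)) (legendre_class p (Legendre r p * e2)) 1"
proof -
  have "\<not> p dvd r"
    using assms(3) by (auto dest: zdvd_imp_le)
  then have r_sq: "Legendre r p * Legendre r p = 1"
    using Legendre_not_dvd by fastforce
  have scale: "(\<lambda>a. r * a mod p) ` legendre_class p (Legendre r p * e) = legendre_class p e"
    if "e \<in> {1, -1}" for e
  proof -
    have "Legendre r p * e \<in> {1, -1}"
      using that Legendre_not_dvd[OF \<open>\<not> p dvd r\<close>] by auto
    then show ?thesis
      using legendre_class_mult[OF assms(1,2) \<open>\<not> p dvd r\<close>] r_sq by (simp flip: mult.assoc)
  qed
  have "coprime r p"
    using prime_imp_coprime[OF assms(1) \<open>\<not> p dvd r\<close>] by (simp add: coprime_commute)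
  then have "diff_count p ((\<lambda>a. r * a mod p) ` legendre_class p (Legendre r p * e1))
      ((\<lambda>a. r * a mod p) ` legendre_class p (Legendre r p * e2)) (r * 1 mod p)
      = diff_count p (legendre_class p (Legendre r p * e1)) (legendre_class p (Legendre r p * e2)) 1"
    using assms(2) legendre_class_subset_residues by (intro diff_count_mult) auto
  moreover have "r * 1 mod p = r"
    using assms(3) by simp
  ultimately show ?thesis
    using scale assms(4,5) by simp
qed

lemma diff_count_legendre_class_commute:
  assumes "prime p" "[p = 1] (mod 4)" "r \<in> {0..<p}" "e1 \<in> {1, -1}" "e2 \<in> {1, -1}"
  shows "diff_count p (legendre_class p e1) (legendre_class p e2) r
       = diff_count p (legendre_class p e2) (legendre_class p e1) r"
proof -
  have "p > 2"
    using assms(1,2) prime_ge_2_int[OF assms(1)] by (cases "p = 2") (auto simp: cong_def)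
  txt \<open>Negation fixes both classes because -1 is a square, and it carries the transposed
    count at -r back to the count at r.\<close>
  have minus: "(\<lambda>a. -1 * a mod p) ` legendre_class p e = legendre_class p e" if "e \<in> {1, -1}" for e
    using legendre_class_mult[OF assms(1) \<open>p > 2\<close> _ that, of "-1"] Legendre_minus_one[OF assms(1,2)]
      \<open>p > 2\<close> by simp
  have "diff_count p ((\<lambda>a. -1 * a mod p) ` legendre_class p e2)
      ((\<lambda>a. -1 * a mod p) ` legendre_class p e1) (-1 * (- r mod p) mod p)
      = diff_count p (legendre_class p e2) (legendre_class p e1) (- r mod p)"
    using \<open>p > 2\<close> legendre_class_subset_residues by (intro diff_count_mult) auto
  then have "diff_count p (legendre_class p e2) (legendre_class p e1) (- r mod p)
      = diff_count p (legendre_class p e2) (legendre_class p e1) (-1 * (- r mod p) mod p)"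
    using minus assms(4,5) by simp
  also have "-1 * (- r mod p) mod p = r"
    using assms(3) by (simp add: mod_minus_eq)
  finally show ?thesis
    using diff_count_commute[OF assms(3)] by simp
qed


section \<open>Cyclotomic numbers of order 2 for p = 4k + 1\<close>

locale prime_1_mod_4 =
  fixes p :: int and k :: nat
  assumes prime: "prime p" and p_eq: "p = 4 * int k + 1"
begin

lemma cong_1_mod_4: "[p = 1] (mod 4)"
  using p_eq by (simp add: cong_def)

lemma k_pos: "k \<ge> 1"
  using prime p_eq by (cases "k = 0") auto

lemma p_gt_2: "p > 2"
  using p_eq k_pos by simp

lemma card_legendre_class_eq: "e \<in> {1, -1} \<Longrightarrow> card (legendre_class p e) = 2 * k"
  using card_legendre_class[OF prime p_gt_2] p_eq by simp

lemma diff_count_row: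
  assumes "X \<subseteq> {0..<p}" "r \<in> {1..p-1}"
  shows "diff_count p X (legendre_class p 1) r + diff_count p X (legendre_class p (-1)) r = card (X - {r})"
proof -
  have "diff_count p X (legendre_class p 1) r + diff_count p X (legendre_class p (-1)) r
      = diff_count p X (legendre_class p 1 \<union> legendre_class p (-1)) r"
    using finite_subset[OF assms(1)] legendre_class_disjoint by (intro diff_count_Un[symmetric]) auto
  also have "\<dots> = card (X - {r})"
    unfolding legendre_class_Un using assms by (intro diff_count_nonzero) auto
  finally show ?thesis .
qed

lemma cyclotomic_numbers_sum:
  "diff_count p (legendre_class p 1) (legendre_class p 1) 1
   + diff_count p (legendre_class p (-1)) (legendre_class p (-1)) 1 + 1 = 2 * k"
proof -
  let ?Q = "legendre_class p 1" and ?N = "legendre_class p (-1)"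
  define a where "a = diff_count p ?Q ?Q 1"
  define b where "b = diff_count p ?N ?N 1"
  have class_value: "diff_count p ?Q ?Q r = (if Legendre r p = 1 then a else b)" if "r \<in> {1..p-1}" for r
    using diff_count_legendre_class_normalize[OF prime p_gt_2 that, of 1 1] Legendre_residue[OF that]
    by (auto simp: a_def b_def)
  have "(\<Sum>r\<in>{1..p-1}. diff_count p ?Q ?Q r)
      = (\<Sum>r\<in>?Q. diff_count p ?Q ?Q r) + (\<Sum>r\<in>?N. diff_count p ?Q ?Q r)"
    unfolding legendre_class_Un[symmetric] using legendre_class_disjoint
    by (intro sum.union_disjoint) auto
  also have "\<dots> = (\<Sum>r\<in>?Q. a) + (\<Sum>r\<in>?N. b)"
    using class_value by (intro arg_cong2[where f = "(+)"] sum.cong) (auto simp: legendre_class_def)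
  finally have "2 * k * (a + b + 1) = 2 * k * (2 * k)"
    using sum_diff_count_nonzero[OF legendre_class_subset_residues[of p 1]] p_gt_2
      card_legendre_class_eq[of 1] card_legendre_class_eq[of "-1"]
    by (simp add: algebra_simps)
  then show ?thesis
    using k_pos by (subst (asm) mult_left_cancel) (auto simp: a_def b_def)
qed

lemma cyclotomic_numbers:
  "diff_count p (legendre_class p 1) (legendre_class p 1) 1 = k - 1"
  "diff_count p (legendre_class p (-1)) (legendre_class p (-1)) 1 = k"
  "diff_count p (legendre_class p 1) (legendre_class p (-1)) 1 = k"
  "diff_count p (legendre_class p (-1)) (legendre_class p 1) 1 = k"
  using diff_count_row[OF legendre_class_subset_residues[of p 1], of 1]
    diff_count_row[OF legendre_class_subset_residues[of p "-1"], of 1]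
    diff_count_legendre_class_commute[OF prime cong_1_mod_4, of 1 1 "-1"]
    card_legendre_class_eq[of 1] card_legendre_class_eq[of "-1"] cyclotomic_numbers_sum
    one_mem_legendre_class[of p] legendre_class_disjoint[of p] k_pos p_gt_2
  by (auto simp: disjoint_iff)

lemma diff_count_legendre_class:
  assumes "r \<in> {1..p-1}" "e1 \<in> {1, -1}" "e2 \<in> {1, -1}"
  shows "diff_count p (legendre_class p e1) (legendre_class p e2) r
       = (if e1 = Legendre r p \<and> e2 = Legendre r p then k - 1 else k)"
proof -
  have norm: "Legendre r p * e = (if e = Legendre r p then 1 else -1)" if "e \<in> {1, -1}" for e
    using sign_mult_eq[OF Legendre_residue[OF assms(1)] that] .
  show ?thesis
    unfolding diff_count_legendre_class_normalize[OF prime p_gt_2 assms] norm[OF assms(2)] norm[OF assms(3)]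
    using cyclotomic_numbers by (simp split: if_splits)
qed

lemma count_Delta_lift:
  assumes "e \<in> {1, -1}"
  shows "count (Delta (2*p) (lift p (legendre_class p e))) d =
    (if d \<in> lift p (legendre_class p e) then 2 * (k - 1)
     else if d \<in> lift p (legendre_class p (-e)) then 2 * k
     else if d = p then 4 * k else 0)"
proof -
  have count_eq: "count (Delta (2*p) (lift p (legendre_class p e))) d
      = (if d = 0 then 0 else diff_count (2*p) (lift p (legendre_class p e)) (lift p (legendre_class p e)) d)"
    by (rule count_Delta) (auto simp: lift_def)
  show ?thesis
  proof (cases "d \<in> {0..<2*p}")
    case False
    then show ?thesis
      unfolding count_eq using diff_count_outside[OF _ False] p_gt_2 by (auto simp: lift_def)
  next
    case True
    then show ?thesis
    proof (cases rule: residues_2p_cases)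
      case 1
      then show ?thesis
        unfolding count_eq using p_gt_2 by (simp add: mem_lift_legendre_class)
    next
      case 2
      then show ?thesis
        unfolding count_eq using True p_gt_2 assms
        by (simp add: mem_lift_legendre_class diff_count_lift legendre_class_subset_residues
            diff_count_zero card_legendre_class_eq)
    next
      case 3
      have "d \<noteq> 0" "d \<noteq> p"
        using 3 by auto
      then have "count (Delta (2*p) (lift p (legendre_class p e))) d
          = 2 * diff_count p (legendre_class p e) (legendre_class p e) (d mod p)"
        unfolding count_eq using True by (simp add: diff_count_lift legendre_class_subset_residues)
      also have "\<dots> = (if Legendre (d mod p) p = e then 2 * (k - 1) else 2 * k)"
        using diff_count_legendre_class[OF 3 assms assms] by simp
      finally show ?thesis
        using True 3 \<open>d \<noteq> p\<close> assms Legendre_residue[OF 3]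
        by (auto simp: mem_lift_legendre_class)
    qed
  qed
qed

lemma count_Delta2_lift:
  "count (Delta2 (2*p) (lift p (legendre_class p 1)) (lift p (legendre_class p (-1)))) d
   + count (Delta2 (2*p) (lift p (legendre_class p (-1))) (lift p (legendre_class p 1))) d
   = (if d \<in> lift p (legendre_class p 1) \<union> lift p (legendre_class p (-1)) then 4 * k else 0)"
proof -
  have count_eq: "count (Delta2 (2*p) (lift p (legendre_class p e1)) (lift p (legendre_class p e2))) d
      = (if d \<in> {0..<2*p} then 2 * diff_count p (legendre_class p e1) (legendre_class p e2) (d mod p) else 0)"
    for e1 e2
    using diff_count_outside[of "2*p" d] p_gt_2
    by (simp add: count_Delta2[OF finite_lift finite_lift] diff_count_lift legendre_class_subset_residues)
  show ?thesis
  proof (cases "d \<in> {0..<2*p}")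
    case False
    then show ?thesis
      unfolding count_eq if_not_P[OF False] using False by (auto simp: lift_def)
  next
    case True
    have "d mod p = 0 \<Longrightarrow> ?thesis"
      unfolding count_eq using True p_gt_2 legendre_class_disjoint
      by (simp add: diff_count_zero legendre_class_subset_residues mem_lift_legendre_class Int_commute)
    moreover have "d mod p \<in> {1..p-1} \<Longrightarrow> ?thesis"
      unfolding count_eq using True Legendre_residue
      by (auto simp: mem_lift_legendre_class diff_count_legendre_class)
    moreover have "0 \<le> d mod p" "d mod p < p"
      using p_gt_2 by simp_all
    then have "d mod p = 0 \<or> d mod p \<in> {1..p-1}"
      by auto
    ultimately show ?thesis
      by blast
  qed
qed

lemma Delta_lift:
  assumes "e \<in> {1, -1}"
  shows "Delta (2*p) (lift p (legendre_class p e)) =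
    mcopies (2 * (k - 1)) (lift p (legendre_class p e)) + mcopies (2 * k) (lift p (legendre_class p (-e)))
    + mcopies (4 * k) {p}"
proof (rule multiset_eqI)
  fix d
  have "p \<notin> lift p (legendre_class p e')" "lift p (legendre_class p e) \<inter> lift p (legendre_class p (-e)) = {}"
    for e'
    using assms by (auto simp: mem_lift_legendre_class)
  then show "count (Delta (2*p) (lift p (legendre_class p e))) d = count (mcopies (2 * (k - 1))
    (lift p (legendre_class p e)) + mcopies (2 * k) (lift p (legendre_class p (-e))) + mcopies (4 * k) {p}) d"
    unfolding count_Delta_lift[OF assms] by (auto simp: count_mcopies finite_lift)
qed

lemma lift_legendre_classes_disjoint:
  "lift p (legendre_class p 1) \<inter> lift p (legendre_class p (-1)) = {}"
  by (auto simp: mem_lift_legendre_class)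

lemma lift_legendre_classes_neq:
  "lift p (legendre_class p 1) \<noteq> lift p (legendre_class p (-1))"
proof -
  have "1 \<in> lift p (legendre_class p 1)"
    using p_gt_2 one_mem_legendre_class[of p] by (simp add: lift_def)
  then show ?thesis
    using lift_legendre_classes_disjoint by blast
qed

lemma pdf_family_lift:
  "pdf_family (2*p) 2 (4 * k) {lift p (legendre_class p 1), lift p (legendre_class p (-1))}"
proof -
  have "lift p (legendre_class p e) \<subseteq> zgrp (2*p) - {0}" for e
    by (auto simp: zgrp_def mem_lift_legendre_class)
  moreover have "card (lift p (legendre_class p e)) = 4 * k" if "e \<in> {1, -1}" for e
    using card_lift[OF legendre_class_subset_residues] card_legendre_class_eq[OF that] by simp
  ultimately show ?thesis
    using lift_legendre_classes_neq lift_legendre_classes_disjoint by (auto simp: pdf_family_def)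
qed

lemma zgrp_minus_lifts:
  "zgrp (2*p) - (lift p (legendre_class p 1) \<union> lift p (legendre_class p (-1)) \<union> {0}) = {p}"
proof (intro equalityI subsetI)
  fix d assume d: "d \<in> zgrp (2*p) - (lift p (legendre_class p 1) \<union> lift p (legendre_class p (-1)) \<union> {0})"
  then have "d \<in> {0..<2*p}"
    by (simp add: zgrp_def)
  then show "d \<in> {p}"
  proof (cases rule: residues_2p_cases)
    case 3
    then show ?thesis
      using d Legendre_residue[OF 3] by (auto simp: zgrp_def mem_lift_legendre_class)
  qed (use d in auto)
qed (use p_gt_2 in \<open>auto simp: zgrp_def mem_lift_legendre_class\<close>)

lemma DPDF_lift:
  "is_DPDF (2*p) 2 (4 * k) (4 * k - 2) (8 * k) {lift p (legendre_class p 1), lift p (legendre_class p (-1))}"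
  unfolding is_DPDF_def
proof (intro conjI ballI pdf_family_lift)
  fix x assume "x \<in> \<Union>{lift p (legendre_class p 1), lift p (legendre_class p (-1))}"
  then show "count (IntD (2*p) {lift p (legendre_class p 1), lift p (legendre_class p (-1))}) x = 4 * k - 2"
    using k_pos lift_legendre_classes_disjoint
    by (auto simp: IntD_pair[OF lift_legendre_classes_neq] count_Delta_lift)
next
  fix x assume "x \<in> zgrp (2*p) - (\<Union>{lift p (legendre_class p 1), lift p (legendre_class p (-1))} \<union> {0})"
  then have "x = p"
    using zgrp_minus_lifts by auto
  then show "count (IntD (2*p) {lift p (legendre_class p 1), lift p (legendre_class p (-1))}) x = 8 * k"
    by (simp add: IntD_pair[OF lift_legendre_classes_neq] count_Delta_lift mem_lift_legendre_class)
qed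

lemma EPDF_lift:
  "is_EPDF (2*p) 2 (4 * k) (4 * k) 0 {lift p (legendre_class p 1), lift p (legendre_class p (-1))}"
  unfolding is_EPDF_def
proof (intro conjI ballI pdf_family_lift)
  fix x assume "x \<in> \<Union>{lift p (legendre_class p 1), lift p (legendre_class p (-1))}"
  then show "count (ExtD (2*p) {lift p (legendre_class p 1), lift p (legendre_class p (-1))}) x = 4 * k"
    using count_Delta2_lift[of x] by (simp add: ExtD_pair[OF lift_legendre_classes_neq])
next
  fix x assume "x \<in> zgrp (2*p) - (\<Union>{lift p (legendre_class p 1), lift p (legendre_class p (-1))} \<union> {0})"
  then show "count (ExtD (2*p) {lift p (legendre_class p 1), lift p (legendre_class p (-1))}) x = 0"
    using count_Delta2_lift[of x] by (simp add: ExtD_pair[OF lift_legendre_classes_neq])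
qed

end

theorem mainTheorem5:
  fixes p :: int and A0 A1 :: "int set"
  assumes "prime p" and "[p = 1] (mod 4)"
    and "A0 = {s. s \<in> {1..p-1} \<and> QuadRes p s} \<union> {s + p | s. s \<in> {1..p-1} \<and> QuadRes p s}"
    and "A1 = {t. t \<in> {1..p-1} \<and> \<not> QuadRes p t} \<union> {t + p | t. t \<in> {1..p-1} \<and> \<not> QuadRes p t}"
  shows "Delta (2*p) A0 = mcopies (nat ((p-5) div 2)) A0 + mcopies (nat ((p-1) div 2)) A1
                          + mcopies (nat (p-1)) {p} \<and>
         Delta (2*p) A1 = mcopies (nat ((p-5) div 2)) A1 + mcopies (nat ((p-1) div 2)) A0
                          + mcopies (nat (p-1)) {p} \<and>
         is_DPDF (2*p) 2 (nat (p-1)) (nat (p-3)) (nat (2*p-2)) {A0, A1} \<and>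
         is_EPDF (2*p) 2 (nat (p-1)) (nat (p-1)) 0 {A0, A1}"
proof -
  define k where "k = nat (p div 4)"
  have p_eq: "p = 4 * int k + 1"
    using assms(2) prime_gt_0_int[OF assms(1)] div_mult_mod_eq[of p 4] by (simp add: k_def cong_def)
  interpret prime_1_mod_4 p k
    using assms(1) p_eq by unfold_locales
  have "lift p (legendre_class p 1) = legendre_class p 1 \<union> (\<lambda>s. s + p) ` legendre_class p 1"
    "lift p (legendre_class p (-1)) = legendre_class p (-1) \<union> (\<lambda>s. s + p) ` legendre_class p (-1)"
    by (rule lift_eq_Un_shift[OF legendre_class_subset_residues])+
  then have "A0 = lift p (legendre_class p 1)" "A1 = lift p (legendre_class p (-1))"
    unfolding assms(3,4) legendre_class_QuadRes by auto
  moreover have "nat ((p-5) div 2) = 2 * (k - 1)" "nat ((p-1) div 2) = 2 * k" "nat (p-1) = 4 * k"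
    "nat (p-3) = 4 * k - 2" "nat (2*p-2) = 8 * k"
    using p_eq k_pos by simp_all
  ultimately show ?thesis
    using Delta_lift[of 1] Delta_lift[of "-1"] DPDF_lift EPDF_lift by simp
qed

end
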